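(* Let $\lambda=(\lambda_1,\ldots,\lambda_n)\in\mathbb{C}^n$ have strictly negative real parts and let $C_\lambda$ be the associated real companion matrix. Let $D\in\mathbb{R}^{r\times nm}$ be such that the pair $(C_\lambda\otimes I_{m\times m},D)$ is observable, and let $P\in\mathbb{R}^{nm\times nm}$ be the unique symmetric positive definite solution of $$(C_\lambda\otimes I_{m\times m})^{T}P+P(C_\lambda\otimes I_{m\times m})+D^{T}D=0.$$ Let $x(t)\in\mathbb{R}^m$ solve $x^{(n)}=-\sum_{k=0}^{n-1}\kappa_{k,\lambda}x^{(k)}$ from the initial state $z_0=(x_0^{(0)},\ldots,x_0^{(n-1)})$, viewed as a vector in $\mathbb{R}^{nm}$ by stacking $x_0^{(0)},\ldots,x_0^{(n-1)}$. Then for all $t\ge 0$, $$x(t)\in\mathcal{E}\big(0,\ I_{m\times nm}P^{-1}I_{nm\times m},\ \|z_0\|_P\big).$$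
   Context: The coefficients $\kappa_{k,\lambda}\in\mathbb{R}$ are defined by $\prod_{i=1}^n(s-\lambda_i)=s^n+\sum_{k=0}^{n-1}\kappa_{k,\lambda}s^k$. $C_\lambda$ is the $n\times n$ matrix with $(C_\lambda)_{i,i+1}=1$ for $i=1,\ldots,n-1$, last row $[-\kappa_{0,\lambda},\ldots,-\kappa_{n-1,\lambda}]$, zeros elsewhere; with the stacked state $z=(x^{(0)},\ldots,x^{(n-1)})\in\mathbb{R}^{nm}$ the system reads $\dot z=(C_\lambda\otimes I_{m\times m})z$. $\otimes$ is the Kronecker product; $I_{m\times nm}=[I_m\ 0\ \cdots\ 0]$ and $I_{nm\times m}=I_{m\times nm}^T$. $\|z\|_P=\sqrt{z^TPz}$. For $c\in\mathbb{R}^m$, a symmetric positive semidefinite $\Sigma$ and $\rho\ge 0$, $\mathcal{E}(c,\Sigma,\rho)=\{c+\rho\,\Sigma^{1/2}u: u\in\mathbb{R}^m,\ \|u\|\le 1\}$ with $\Sigma^{1/2}$ the symmetric positive semidefinite square root. *)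

theory Defs
  imports "Jordan_Normal_Form.Matrix" "HOL-Computational_Algebra.Polynomial" Complex_Main
begin

text \<open>Indices of lambda are 0..n-1 (lam 0 = lambda_1, ...).  Taken as the real part of the
  complex coefficient; the statement separately assumes these coefficients are real.\<close>
definition charpoly_lam :: "nat \<Rightarrow> (nat \<Rightarrow> complex) \<Rightarrow> complex poly" where
  "charpoly_lam n lam = (\<Prod>i<n. [:- lam i, 1:])"

definition kappa :: "nat \<Rightarrow> (nat \<Rightarrow> complex) \<Rightarrow> nat \<Rightarrow> real" where
  "kappa n lam k = Re (coeff (charpoly_lam n lam) k)"

definition companion :: "nat \<Rightarrow> (nat \<Rightarrow> complex) \<Rightarrow> real mat" where
  "companion n lam = mat n n (\<lambda>(i, j).
     if i = n - 1 then - kappa n lam j else if j = i + 1 then 1 else 0)"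

definition kron :: "real mat \<Rightarrow> real mat \<Rightarrow> real mat" where
  "kron A B = mat (dim_row A * dim_row B) (dim_col A * dim_col B)
     (\<lambda>(p, q). A $$ (p div dim_row B, q div dim_col B) * B $$ (p mod dim_row B, q mod dim_col B))"

text \<open>I_{m x nm} = [I_m 0 ... 0] and I_{nm x m} its transpose.\<close>
definition I_sel :: "nat \<Rightarrow> nat \<Rightarrow> real mat" where
  "I_sel m N = mat m N (\<lambda>(i, j). if i = j then 1 else 0)"

text \<open>Observability of the pair (A, D) with A of size N x N: the unobservable subspace
  (common kernel of D A^k, k < N, i.e. kernel of the Kalman observability matrix) is trivial,
  i.e. the observability matrix has full column rank N.\<close>
definition observable :: "nat \<Rightarrow> real mat \<Rightarrow> real mat \<Rightarrow> bool" where
  "observable N A D \<longleftrightarrow>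
     (\<forall>v \<in> carrier_vec N. (\<forall>k<N. D *\<^sub>v ((A ^\<^sub>m k) *\<^sub>v v) = 0\<^sub>v (dim_row D)) \<longrightarrow> v = 0\<^sub>v N)"

definition sym_mat :: "real mat \<Rightarrow> bool" where
  "sym_mat A \<longleftrightarrow> transpose_mat A = A"

definition pos_def :: "nat \<Rightarrow> real mat \<Rightarrow> bool" where
  "pos_def N A \<longleftrightarrow> A \<in> carrier_mat N N \<and> sym_mat A \<and>
     (\<forall>v \<in> carrier_vec N. v \<noteq> 0\<^sub>v N \<longrightarrow> v \<bullet> (A *\<^sub>v v) > 0)"

definition pos_semidef :: "nat \<Rightarrow> real mat \<Rightarrow> bool" where
  "pos_semidef N A \<longleftrightarrow> A \<in> carrier_mat N N \<and> sym_mat A \<and>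
     (\<forall>v \<in> carrier_vec N. v \<bullet> (A *\<^sub>v v) \<ge> 0)"

definition mat_inv :: "nat \<Rightarrow> real mat \<Rightarrow> real mat" where
  "mat_inv N A = (THE B. B \<in> carrier_mat N N \<and> A * B = 1\<^sub>m N \<and> B * A = 1\<^sub>m N)"

definition psd_sqrt :: "nat \<Rightarrow> real mat \<Rightarrow> real mat" where
  "psd_sqrt N S = (THE R. pos_semidef N R \<and> R * R = S)"

definition ellipsoid :: "nat \<Rightarrow> real vec \<Rightarrow> real mat \<Rightarrow> real \<Rightarrow> real vec set" where
  "ellipsoid m c Sig rho =
     {c + rho \<cdot>\<^sub>v (psd_sqrt m Sig *\<^sub>v u) | u. u \<in> carrier_vec m \<and> sqrt (u \<bullet> u) \<le> 1}"

definition P_norm :: "real mat \<Rightarrow> real vec \<Rightarrow> real" where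
  "P_norm P z = sqrt (z \<bullet> (P *\<^sub>v z))"

end

theory Submission
  imports Defs "Jordan_Normal_Form.Spectral_Radius"
begin

text \<open>The stacked state \<open>z = (x, x', \<dots>, x\<^sup>(\<^sup>n\<^sup>-\<^sup>1\<^sup>))\<close> solves \<open>z' = A z\<close> with
  \<open>A = C\<^sub>\<lambda> \<otimes> I\<^sub>m\<close>, so the Lyapunov equation gives \<open>(z\<^sup>T P z)' = - \<bar>D z\<bar>\<^sup>2 \<le> 0\<close>
  and the trajectory stays in the sublevel set \<open>z\<^sup>T P z \<le> \<parallel>z\<^sub>0\<parallel>\<^sub>P\<^sup>2\<close>.
  Its first block is \<open>S z\<close> with \<open>S = I\<^sub>m\<^sub>\<times>\<^sub>n\<^sub>m\<close>. Put \<open>\<Sigma> = S P\<^sup>-\<^sup>1 S\<^sup>T\<close>: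
  the Cauchy-Schwarz inequality for the inner product defined by \<open>P\<close> gives
  \<open>(w \<bullet> S z)\<^sup>2 \<le> (w\<^sup>T \<Sigma> w) (z\<^sup>T P z)\<close> for every \<open>w\<close>, and the test vector
  \<open>w = \<Sigma>\<^sup>-\<^sup>1 S z\<close> turns this into \<open>\<bar>\<Sigma>\<^sup>-\<^sup>1\<^sup>/\<^sup>2 S z\<bar> \<le> \<parallel>z\<^sub>0\<parallel>\<^sub>P\<close>, i.e. into
  membership in the ellipsoid. The symmetric square root \<open>\<Sigma>\<^sup>1\<^sup>/\<^sup>2\<close> is built from the
  spectral theorem for real symmetric matrices.
  Stability of \<open>\<lambda>\<close> and observability only serve to make \<open>P\<close> exist; the argument needs
  nothing beyond \<open>P\<close> and the Lyapunov equation.\<close>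

section \<open>Quadratic forms\<close>

lemma scalar_prod_self_nonneg: "(v :: real vec) \<bullet> v \<ge> 0"
  using conjugate_square_ge_0_vec[of v] by simp

lemma scalar_prod_self_eq_0_iff:
  "(v :: real vec) \<in> carrier_vec n \<Longrightarrow> v \<bullet> v = 0 \<longleftrightarrow> v = 0\<^sub>v n"
  using conjugate_square_eq_0_vec[of v n] by simp

lemma mult_mat_vec_zero:
  "(A :: 'a :: semiring_0 mat) \<in> carrier_mat nr nc \<Longrightarrow> A *\<^sub>v 0\<^sub>v nc = 0\<^sub>v nr"
  by (intro eq_vecI) (auto simp: scalar_prod_def)

lemma sym_mat_entry:
  assumes "B \<in> carrier_mat n n" and "sym_mat B" and "i < n" and "j < n"
  shows "B $$ (j, i) = B $$ (i, j)"
  using assms unfolding sym_mat_def by (metis carrier_matD index_transpose_mat(1))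

lemma sym_mat_bilinear_comm:
  fixes R :: "real mat"
  assumes R: "R \<in> carrier_mat N N" and sym: "sym_mat R"
    and a: "a \<in> carrier_vec N" and b: "b \<in> carrier_vec N"
  shows "b \<bullet> (R *\<^sub>v a) = a \<bullet> (R *\<^sub>v b)"
proof -
  have "b \<bullet> (R *\<^sub>v a) = (transpose_mat R *\<^sub>v b) \<bullet> a"
    using transpose_vec_mult_scalar[OF R a b] by simp
  also have "\<dots> = a \<bullet> (R *\<^sub>v b)"
    using sym R a b unfolding sym_mat_def by (metis comm_scalar_prod mult_mat_vec_carrier)
  finally show ?thesis .
qed

lemma quadratic_nonneg_imp_discriminant_nonpos:
  fixes \<alpha> \<beta> \<gamma> :: real
  assumes nonneg: "\<And>t. 0 \<le> \<alpha> + 2 * t * \<beta> + t\<^sup>2 * \<gamma>" and "\<gamma> \<ge> 0"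
  shows "\<beta>\<^sup>2 \<le> \<alpha> * \<gamma>"
proof (cases "\<gamma> = 0")
  case True
  have "\<beta> = 0"
  proof (rule ccontr)
    assume "\<beta> \<noteq> 0"
    then have "\<alpha> + 2 * (- (\<alpha> + 1) / (2 * \<beta>)) * \<beta> = -1"
      by (simp add: field_simps)
    then show False
      using nonneg[of "- (\<alpha> + 1) / (2 * \<beta>)"] True by simp
  qed
  then show ?thesis
    using True by simp
next
  case False
  then have \<gamma>: "\<gamma> > 0"
    using assms(2) by simp
  have "0 \<le> \<alpha> + 2 * (- \<beta> / \<gamma>) * \<beta> + (- \<beta> / \<gamma>)\<^sup>2 * \<gamma>"
    by (rule nonneg)
  also have "\<dots> = \<alpha> - \<beta>\<^sup>2 / \<gamma>"
    using \<gamma> by (simp add: field_simps power2_eq_square)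
  finally show ?thesis
    using \<gamma> by (simp add: field_simps)
qed

lemma pos_semidef_cauchy_schwarz:
  assumes R: "pos_semidef N R" and a: "a \<in> carrier_vec N" and b: "b \<in> carrier_vec N"
  shows "(a \<bullet> (R *\<^sub>v b))\<^sup>2 \<le> (a \<bullet> (R *\<^sub>v a)) * (b \<bullet> (R *\<^sub>v b))"
proof (rule quadratic_nonneg_imp_discriminant_nonpos)
  have Rc: "R \<in> carrier_mat N N" and sym: "sym_mat R"
    using R unfolding pos_semidef_def by auto
  show "b \<bullet> (R *\<^sub>v b) \<ge> 0"
    using R b unfolding pos_semidef_def by auto
  fix t :: real
  have ab: "a + t \<cdot>\<^sub>v b \<in> carrier_vec N"
    using a b by simp
  have "0 \<le> (a + t \<cdot>\<^sub>v b) \<bullet> (R *\<^sub>v (a + t \<cdot>\<^sub>v b))"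
    using R ab unfolding pos_semidef_def by auto
  also have "R *\<^sub>v (a + t \<cdot>\<^sub>v b) = R *\<^sub>v a + t \<cdot>\<^sub>v (R *\<^sub>v b)"
    using Rc a b by (simp add: mult_add_distrib_mat_vec mult_mat_vec)
  also have "(a + t \<cdot>\<^sub>v b) \<bullet> (R *\<^sub>v a + t \<cdot>\<^sub>v (R *\<^sub>v b))
      = a \<bullet> (R *\<^sub>v a) + t * (a \<bullet> (R *\<^sub>v b)) + t * (b \<bullet> (R *\<^sub>v a)) + t * t * (b \<bullet> (R *\<^sub>v b))"
    using Rc a b
    by (simp add: add_scalar_prod_distrib[of _ N] scalar_prod_add_distrib[of _ N] algebra_simps)
  also have "b \<bullet> (R *\<^sub>v a) = a \<bullet> (R *\<^sub>v b)"
    by (rule sym_mat_bilinear_comm[OF Rc sym a b])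
  finally show "0 \<le> a \<bullet> (R *\<^sub>v a) + 2 * t * (a \<bullet> (R *\<^sub>v b)) + t\<^sup>2 * (b \<bullet> (R *\<^sub>v b))"
    by (simp add: power2_eq_square algebra_simps)
qed

lemma pos_semidef_quadratic_form_eq_0D:
  assumes R: "pos_semidef N R" and v: "v \<in> carrier_vec N" and zero: "v \<bullet> (R *\<^sub>v v) = 0"
  shows "R *\<^sub>v v = 0\<^sub>v N"
proof -
  have Rv: "R *\<^sub>v v \<in> carrier_vec N"
    using R v unfolding pos_semidef_def by auto
  have "((R *\<^sub>v v) \<bullet> (R *\<^sub>v v))\<^sup>2 \<le> ((R *\<^sub>v v) \<bullet> (R *\<^sub>v (R *\<^sub>v v))) * (v \<bullet> (R *\<^sub>v v))"
    by (rule pos_semidef_cauchy_schwarz[OF R Rv v])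
  then have "(R *\<^sub>v v) \<bullet> (R *\<^sub>v v) = 0"
    using zero by simp
  then show ?thesis
    using scalar_prod_self_eq_0_iff[OF Rv] by simp
qed

lemma pos_def_imp_pos_semidef: "pos_def N P \<Longrightarrow> pos_semidef N P"
  unfolding pos_def_def pos_semidef_def by (auto simp: less_imp_le)

lemma pos_def_mult_vec_eq_0D:
  assumes P: "pos_def N P" and v: "v \<in> carrier_vec N" and zero: "P *\<^sub>v v = 0\<^sub>v N"
  shows "v = 0\<^sub>v N"
proof (rule ccontr)
  assume "v \<noteq> 0\<^sub>v N"
  then have "v \<bullet> (P *\<^sub>v v) > 0"
    using P v unfolding pos_def_def by auto
  then show False
    using zero v by simp
qed
lemma quadratic_form_congruence:
  fixes S M :: "real mat"
  assumes S: "S \<in> carrier_mat m N" and M: "M \<in> carrier_mat N N" and w: "w \<in> carrier_vec m"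
  shows "w \<bullet> ((S * M * transpose_mat S) *\<^sub>v w)
    = (transpose_mat S *\<^sub>v w) \<bullet> (M *\<^sub>v (transpose_mat S *\<^sub>v w))"
proof -
  have "(S * M * transpose_mat S) *\<^sub>v w = (S * M) *\<^sub>v (transpose_mat S *\<^sub>v w)"
    by (rule assoc_mult_mat_vec[of _ m N]) (use S M w in auto)
  also have "\<dots> = S *\<^sub>v (M *\<^sub>v (transpose_mat S *\<^sub>v w))"
    by (rule assoc_mult_mat_vec[of _ m N]) (use S M w in auto)
  finally show ?thesis
    using transpose_vec_mult_scalar[OF S _ w, of "M *\<^sub>v (transpose_mat S *\<^sub>v w)"] S M w by simp
qed

lemma sym_mat_congruence:
  fixes S M :: "real mat"
  assumes S: "S \<in> carrier_mat m N" and M: "M \<in> carrier_mat N N" and sym: "sym_mat M"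
  shows "sym_mat (S * M * transpose_mat S)"
proof -
  have "transpose_mat (S * M * transpose_mat S)
      = transpose_mat (transpose_mat S) * transpose_mat (S * M)"
    by (rule transpose_mult) (use S M in auto)
  also have "transpose_mat (S * M) = transpose_mat M * transpose_mat S"
    by (rule transpose_mult) (use S M in auto)
  also have "transpose_mat (transpose_mat S) * (transpose_mat M * transpose_mat S)
      = S * M * transpose_mat S"
    using S M sym unfolding sym_mat_def by (simp add: assoc_mult_mat[of S m N M N _ m])
  finally show ?thesis
    unfolding sym_mat_def .
qed

lemma pos_semidef_congruence:
  fixes S M :: "real mat"
  assumes M: "pos_semidef N M" and S: "S \<in> carrier_mat m N"
  shows "pos_semidef m (S * M * transpose_mat S)"
  using assms quadratic_form_congruence[OF S] sym_mat_congruence[OF S]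
  unfolding pos_semidef_def by auto

lemma pos_def_congruence:
  fixes S M :: "real mat"
  assumes M: "pos_def N M" and S: "S \<in> carrier_mat m N"
    and inj: "\<And>w. w \<in> carrier_vec m \<Longrightarrow> transpose_mat S *\<^sub>v w = 0\<^sub>v N \<Longrightarrow> w = 0\<^sub>v m"
  shows "pos_def m (S * M * transpose_mat S)"
proof -
  have "w \<bullet> ((S * M * transpose_mat S) *\<^sub>v w) > 0"
    if w: "w \<in> carrier_vec m" "w \<noteq> 0\<^sub>v m" for w
  proof -
    have "transpose_mat S *\<^sub>v w \<in> carrier_vec N" "transpose_mat S *\<^sub>v w \<noteq> 0\<^sub>v N"
      using S w inj by auto
    then show ?thesis
      using M S w quadratic_form_congruence[OF S _ w(1), of M] unfolding pos_def_def by auto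
  qed
  then show ?thesis
    using M S sym_mat_congruence[OF S] unfolding pos_def_def by auto
qed

lemma mat_diag_mult_vec:
  assumes v: "v \<in> carrier_vec N"
  shows "mat_diag N d *\<^sub>v v = vec N (\<lambda>i. d i * v $ i)"
proof (rule eq_vecI)
  fix i assume "i < dim_vec (vec N (\<lambda>i. d i * v $ i))"
  then have i: "i < N"
    by simp
  have "(mat_diag N d *\<^sub>v v) $ i = (\<Sum>j\<in>{0..<N}. (if i = j then d j else 0) * v $ j)"
    using i v by (simp add: mat_diag_def scalar_prod_def)
  also have "\<dots> = (\<Sum>j\<in>{0..<N}. if j = i then d i * v $ i else 0)"
    by (rule sum.cong) auto
  finally show "(mat_diag N d *\<^sub>v v) $ i = vec N (\<lambda>i. d i * v $ i) $ i"
    using i by simp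
qed (simp add: mat_diag_def)

lemma pos_semidef_mat_diag:
  assumes "\<And>i. i < N \<Longrightarrow> d i \<ge> 0"
  shows "pos_semidef N (mat_diag N d)"
proof -
  have "v \<bullet> (mat_diag N d *\<^sub>v v) \<ge> 0" if v: "v \<in> carrier_vec N" for v
  proof -
    have "v $ i * (d i * v $ i) \<ge> 0" if "i < N" for i
      using assms[OF that] by (simp add: mult.left_commute[of "v $ i"] mult_nonneg_nonneg)
    then show ?thesis
      unfolding mat_diag_mult_vec[OF v] scalar_prod_def using v by (auto intro!: sum_nonneg)
  qed
  then show ?thesis
    unfolding pos_semidef_def sym_mat_def mat_diag_def by (auto intro!: eq_matI)
qed

section \<open>Orthogonal diagonalization of real symmetric matrices\<close>

lemma assoc_mult_mat_4:
  fixes A B C D :: "'a :: semiring_1 mat"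
  assumes "A \<in> carrier_mat n n" "B \<in> carrier_mat n n" "C \<in> carrier_mat n n" "D \<in> carrier_mat n n"
  shows "(A * B) * (C * D) = A * (B * C) * D"
proof -
  have "(A * B) * (C * D) = A * (B * (C * D))"
    using assms by (meson assoc_mult_mat mult_carrier_mat)
  also have "B * (C * D) = (B * C) * D"
    using assoc_mult_mat[OF assms(2,3,4)] by simp
  also have "A * ((B * C) * D) = A * (B * C) * D"
    using assms by (metis assoc_mult_mat mult_carrier_mat)
  finally show ?thesis .
qed

lemma assoc_mult_mat_5:
  fixes A B C D E :: "'a :: semiring_1 mat"
  assumes "A \<in> carrier_mat n n" "B \<in> carrier_mat n n" "C \<in> carrier_mat n n"
    "D \<in> carrier_mat n n" "E \<in> carrier_mat n n"
  shows "(A * B) * C * (D * E) = A * (B * C * D) * E"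
proof -
  have "(A * B) * C = A * (B * C)"
    using assms by (meson assoc_mult_mat)
  then show ?thesis
    using assms assoc_mult_mat_4[of A n "B * C" D E] by simp
qed

definition orth_mat :: "nat \<Rightarrow> real mat \<Rightarrow> bool" where
  "orth_mat N Q \<longleftrightarrow>
     Q \<in> carrier_mat N N \<and> transpose_mat Q * Q = 1\<^sub>m N \<and> Q * transpose_mat Q = 1\<^sub>m N"

lemma orth_mat_mult:
  assumes Q: "orth_mat N Q" and R: "orth_mat N R"
  shows "orth_mat N (Q * R)"
proof -
  have carr: "Q \<in> carrier_mat N N" "R \<in> carrier_mat N N"
      "transpose_mat Q \<in> carrier_mat N N" "transpose_mat R \<in> carrier_mat N N"
    using Q R unfolding orth_mat_def by auto
  have "transpose_mat (Q * R) * (Q * R) = transpose_mat R * (transpose_mat Q * Q) * R"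
    using carr by (simp add: transpose_mult assoc_mult_mat_4)
  moreover have "Q * R * transpose_mat (Q * R) = Q * (R * transpose_mat R) * transpose_mat Q"
    using carr by (simp add: transpose_mult assoc_mult_mat_4)
  ultimately show ?thesis
    using Q R carr unfolding orth_mat_def by auto
qed

definition block_diag1 :: "'a :: zero \<Rightarrow> 'a mat \<Rightarrow> 'a mat" where
  "block_diag1 e A = four_block_mat (mat 1 1 (\<lambda>_. e)) (0\<^sub>m 1 (dim_col A)) (0\<^sub>m (dim_row A) 1) A"

lemma block_diag1_carrier:
  "A \<in> carrier_mat n n \<Longrightarrow> block_diag1 e A \<in> carrier_mat (Suc n) (Suc n)"
  unfolding block_diag1_def by auto

lemma transpose_block_diag1:
  "A \<in> carrier_mat n n \<Longrightarrow> transpose_mat (block_diag1 e A) = block_diag1 e (transpose_mat A)"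
  unfolding block_diag1_def by (intro eq_matI) auto

lemma block_diag1_mult:
  fixes A B :: "'a :: comm_ring_1 mat"
  assumes A: "A \<in> carrier_mat n n" and B: "B \<in> carrier_mat n n"
  shows "block_diag1 e A * block_diag1 f B = block_diag1 (e * f) (A * B)"
proof -
  have "mat 1 1 (\<lambda>_. e) * mat 1 1 (\<lambda>_. f) = (mat 1 1 (\<lambda>_. e * f) :: 'a mat)"
    by (intro eq_matI) (auto simp: scalar_prod_def)
  then show ?thesis
    unfolding block_diag1_def using A B
    by (subst mult_four_block_mat[of _ 1 1 _ n _ n _ _ 1 _ n]) auto
qed

lemma block_diag1_one: "block_diag1 1 (1\<^sub>m n) = 1\<^sub>m (Suc n)"
  unfolding block_diag1_def by (intro eq_matI) auto

lemma diagonal_mat_block_diag1: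
  "D \<in> carrier_mat n n \<Longrightarrow> diagonal_mat D \<Longrightarrow> diagonal_mat (block_diag1 e D)"
  unfolding block_diag1_def diagonal_mat_def by auto

lemma orth_mat_block_diag1:
  assumes Q: "orth_mat n Q"
  shows "orth_mat (Suc n) (block_diag1 1 Q)"
proof -
  have Qc: "Q \<in> carrier_mat n n" and Qtc: "transpose_mat Q \<in> carrier_mat n n"
    using Q unfolding orth_mat_def by auto
  have "transpose_mat (block_diag1 1 Q) * block_diag1 1 Q = block_diag1 1 (transpose_mat Q * Q)"
    using transpose_block_diag1[OF Qc] block_diag1_mult[OF Qtc Qc] by simp
  moreover have "block_diag1 1 Q * transpose_mat (block_diag1 1 Q) = block_diag1 1 (Q * transpose_mat Q)"
    using transpose_block_diag1[OF Qc] block_diag1_mult[OF Qc Qtc] by simp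
  ultimately show ?thesis
    using Q block_diag1_carrier[OF Qc] block_diag1_one[of n] unfolding orth_mat_def by simp
qed

text \<open>A complex eigenvector \<open>w\<close> of \<open>A\<close> has the real Rayleigh quotient
  \<open>w\<^sup>* A w / w\<^sup>* w\<close>, so the eigenvalue is real and is a root of the real characteristic
  polynomial.\<close>
lemma sym_mat_has_real_eigenvalue:
  fixes A :: "real mat"
  assumes A: "A \<in> carrier_mat n n" and sym: "sym_mat A" and n: "n > 0"
  shows "\<exists>e. eigenvalue A e"
proof -
  define Ac where "Ac = map_mat complex_of_real A"
  have Ac: "Ac \<in> carrier_mat n n"
    using A by (simp add: Ac_def)
  from spectrum_non_empty[OF Ac n] obtain c where c: "eigenvalue Ac c"
    unfolding spectrum_def by auto
  then obtain w where w: "w \<in> carrier_vec n" "w \<noteq> 0\<^sub>v n" "Ac *\<^sub>v w = c \<cdot>\<^sub>v w"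
    unfolding eigenvalue_def eigenvector_def using Ac by auto
  define s where "s = (\<Sum>i<n. cnj (w $ i) * (Ac *\<^sub>v w) $ i)"
  have cnj_mult_self: "cnj z * z = (complex_of_real (cmod z))\<^sup>2" for z
    by (metis complex_norm_square mult.commute of_real_power)
  have s_eigen: "s = c * of_real (\<Sum>i<n. (cmod (w $ i))\<^sup>2)"
    unfolding s_def w(3) using w(1)
    by (auto simp: sum_distrib_left cnj_mult_self intro!: sum.cong)
  have s_form: "s = (\<Sum>i<n. \<Sum>j<n. cnj (w $ i) * of_real (A $$ (i, j)) * w $ j)"
    unfolding s_def using w(1) A Ac
    by (auto simp: Ac_def mult_mat_vec_def scalar_prod_def sum_distrib_left atLeast0LessThan
        intro!: sum.cong)
  have "cnj s = (\<Sum>i<n. \<Sum>j<n. w $ i * of_real (A $$ (i, j)) * cnj (w $ j))"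
    unfolding s_form by simp
  also have "\<dots> = (\<Sum>j<n. \<Sum>i<n. w $ i * of_real (A $$ (i, j)) * cnj (w $ j))"
    by (rule sum.swap)
  also have "\<dots> = s"
    unfolding s_form using sym_mat_entry[OF A sym] by (auto intro!: sum.cong simp: ac_simps)
  finally have "Im s = 0"
    by (metis cnj.simps(2) neg_equal_zero)
  obtain i0 where i0: "i0 < n" "w $ i0 \<noteq> 0"
    using w(1,2) by (metis carrier_vecD eq_vecI index_zero_vec(1) index_zero_vec(2))
  have "(\<Sum>i<n. (cmod (w $ i))\<^sup>2) > 0"
    by (rule sum_pos2[of _ i0]) (use i0 in auto)
  then have "Im c = 0"
    using \<open>Im s = 0\<close> unfolding s_eigen by simp
  then have c_real: "c = of_real (Re c)"
    by (simp add: complex_eq_iff)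
  have "poly (char_poly Ac) c = 0"
    using eigenvalue_root_char_poly[OF Ac] c by auto
  then have "poly (map_poly of_real (char_poly A)) (of_real (Re c) :: complex) = 0"
    using of_real_hom.char_poly_hom[OF A] c_real unfolding Ac_def by metis
  then have "poly (char_poly A) (Re c) = 0"
    by simp
  then show ?thesis
    using eigenvalue_root_char_poly[OF A] by auto
qed

lemma householder_mult_self:
  fixes u :: "real vec"
  assumes u: "u \<in> carrier_vec n" and a: "a * a * (u \<bullet> u) = 2 * a"
  defines "H \<equiv> mat n n (\<lambda>(i, j). (if i = j then 1 else 0) - a * u $ i * u $ j)"
  shows "H * H = 1\<^sub>m n"
proof (rule eq_matI)
  fix i j assume "i < dim_row (1\<^sub>m n :: real mat)" "j < dim_col (1\<^sub>m n :: real mat)"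
  then have i: "i < n" and j: "j < n"
    by auto
  have uu: "u \<bullet> u = (\<Sum>k<n. (u $ k)\<^sup>2)"
    using u by (simp add: scalar_prod_def power2_eq_square atLeast0LessThan)
  have "(H * H) $$ (i, j) = (\<Sum>k<n. ((if i = k then 1 else 0) - a * u $ i * u $ k)
      * ((if k = j then 1 else 0) - a * u $ k * u $ j))"
    using i j unfolding H_def by (simp add: scalar_prod_def atLeast0LessThan row_def col_def)
  also have "\<dots> = (\<Sum>k<n. (if k = i then (if i = j then 1 else 0) else 0)
      - (if k = i then a * u $ k * u $ j else 0) - (if k = j then a * u $ i * u $ k else 0)
      + a * a * u $ i * u $ j * (u $ k)\<^sup>2)"
    by (rule sum.cong) (auto simp: algebra_simps power2_eq_square)
  also have "\<dots> = (if i = j then 1 else 0) - 2 * a * u $ i * u $ j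
      + (a * a * (u \<bullet> u)) * u $ i * u $ j"
    using i j by (simp add: sum.distrib sum_subtractf sum_distrib_left[symmetric] uu)
  also have "\<dots> = 1\<^sub>m n $$ (i, j)"
    unfolding a using i j by simp
  finally show "(H * H) $$ (i, j) = 1\<^sub>m n $$ (i, j)" .
qed (simp_all add: H_def)

text \<open>The Householder reflection \<open>I - 2 u u\<^sup>T / (u\<^sup>T u)\<close> with \<open>u = v - e\<^sub>0\<close>.\<close>
lemma unit_vec_orth_mat_first_col:
  fixes v :: "real vec"
  assumes v: "v \<in> carrier_vec n" and vv: "v \<bullet> v = 1" and n: "n > 0"
  shows "\<exists>H. orth_mat n H \<and> col H 0 = v"
proof (cases "v = unit_vec n 0")
  case True
  then show ?thesis
    using n by (intro exI[of _ "1\<^sub>m n"]) (auto simp: orth_mat_def)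
next
  case False
  define u where "u = v - unit_vec n 0"
  define a where "a = 2 / (u \<bullet> u)"
  have u: "u \<in> carrier_vec n"
    unfolding u_def using v by simp
  have "u \<noteq> 0\<^sub>v n"
  proof
    assume u0: "u = 0\<^sub>v n"
    have "v $ i = unit_vec n 0 $ i" if "i < n" for i
      using arg_cong[OF u0, of "\<lambda>x. x $ i"] that v unfolding u_def by simp
    then have "v = unit_vec n 0"
      using v by (intro eq_vecI) auto
    then show False
      using False by contradiction
  qed
  then have uu_pos: "u \<bullet> u > 0"
    using scalar_prod_self_nonneg[of u] scalar_prod_self_eq_0_iff[OF u] by linarith
  have "u \<bullet> u = v \<bullet> v - 2 * v $ 0 + 1"
    unfolding u_def using v n
    by (simp add: minus_scalar_prod_distrib[of _ n] scalar_prod_minus_distrib[of _ n]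
        comm_scalar_prod[of "unit_vec n 0" n v] scalar_prod_right_unit)
  then have uu: "u \<bullet> u = - 2 * u $ 0"
    unfolding u_def using vv v n by simp
  have au0: "a * u $ 0 = -1"
    unfolding a_def using uu_pos uu by (simp add: field_simps)
  have "a * a * (u \<bullet> u) = 2 * a"
    unfolding a_def using uu_pos by (simp add: field_simps)
  define H where "H = mat n n (\<lambda>(i, j). (if i = j then 1 else 0) - a * u $ i * u $ j)"
  have H: "H \<in> carrier_mat n n" and Ht: "transpose_mat H = H" and HH: "H * H = 1\<^sub>m n"
    unfolding H_def using householder_mult_self[OF u \<open>a * a * (u \<bullet> u) = 2 * a\<close>]
    by (auto intro!: eq_matI)
  have "col H 0 = v"
  proof (rule eq_vecI)
    fix i assume "i < dim_vec v"
    then have i: "i < n"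
      using v by simp
    have "col H 0 $ i = (if i = 0 then 1 else 0) - (a * u $ 0) * u $ i"
      using i n unfolding H_def by simp
    also have "\<dots> = v $ i"
      unfolding au0 using i v n unfolding u_def by simp
    finally show "col H 0 $ i = v $ i" .
  qed (use H v in auto)
  then show ?thesis
    using H HH Ht by (intro exI[of _ H]) (simp add: orth_mat_def)
qed

lemma orth_mat_conj_eigenvector_col:
  fixes A H :: "real mat"
  assumes H: "orth_mat N H" and A: "A \<in> carrier_mat N N"
    and colH: "col H 0 = v" and Av: "A *\<^sub>v v = e \<cdot>\<^sub>v v" and i: "i < N"
  shows "(transpose_mat H * A * H) $$ (i, 0) = (if i = 0 then e else 0)"
proof -
  have Hc: "H \<in> carrier_mat N N" and HtH: "transpose_mat H * H = 1\<^sub>m N"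
    using H unfolding orth_mat_def by auto
  have v: "v \<in> carrier_vec N"
    using Hc colH col_dim[of H 0] by simp
  have "(transpose_mat H * A * H) $$ (i, 0) = ((transpose_mat H * A) *\<^sub>v v) $ i"
    using i Hc A colH by (subst index_mult_mat(1)) auto
  also have "\<dots> = (transpose_mat H *\<^sub>v (e \<cdot>\<^sub>v v)) $ i"
    using Hc A v Av by (simp add: assoc_mult_mat_vec[of _ N N])
  also have "\<dots> = e * (transpose_mat H * H) $$ (i, 0)"
    using i Hc v colH by (simp add: mult_mat_vec)
  also have "\<dots> = (if i = 0 then e else 0)"
    unfolding HtH using i by simp
  finally show ?thesis .
qed

lemma sym_mat_eq_block_diag1:
  fixes B :: "real mat"
  assumes B: "B \<in> carrier_mat (Suc n) (Suc n)" and sym: "sym_mat B"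
    and col0: "\<And>i. i < Suc n \<Longrightarrow> B $$ (i, 0) = (if i = 0 then e else 0)"
  shows "B = block_diag1 e (mat n n (\<lambda>(i, j). B $$ (Suc i, Suc j)))"
proof -
  have "B $$ (i, j) = block_diag1 e (mat n n (\<lambda>(i, j). B $$ (Suc i, Suc j))) $$ (i, j)"
    if i: "i < Suc n" and j: "j < Suc n" for i j
  proof (cases "i = 0 \<or> j = 0")
    case True
    then show ?thesis
      using col0[OF i] col0[OF j] sym_mat_entry[OF B sym _ j, of 0] i j unfolding block_diag1_def by auto
  next
    case False
    then obtain i' j' where "i = Suc i'" "j = Suc j'"
      by (metis not0_implies_Suc)
    then show ?thesis
      using i j unfolding block_diag1_def by auto
  qed
  then show ?thesis
    using B block_diag1_carrier[of "mat n n (\<lambda>(i, j). B $$ (Suc i, Suc j))" n e]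
    by (intro eq_matI) auto
qed

lemma sym_mat_deflation:
  fixes A :: "real mat"
  assumes A: "A \<in> carrier_mat (Suc n) (Suc n)" and sym: "sym_mat A"
  shows "\<exists>H e A'. orth_mat (Suc n) H \<and> A' \<in> carrier_mat n n \<and> sym_mat A' \<and>
           transpose_mat H * A * H = block_diag1 e A'"
proof -
  obtain e w where w: "w \<in> carrier_vec (Suc n)" "w \<noteq> 0\<^sub>v (Suc n)" "A *\<^sub>v w = e \<cdot>\<^sub>v w"
    using sym_mat_has_real_eigenvalue[OF A sym] A unfolding eigenvalue_def eigenvector_def by auto
  define v where "v = (1 / sqrt (w \<bullet> w)) \<cdot>\<^sub>v w"
  have ww: "w \<bullet> w > 0"
    using scalar_prod_self_nonneg[of w] scalar_prod_self_eq_0_iff[OF w(1)] w(2) by linarith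
  have v: "v \<in> carrier_vec (Suc n)" and vv: "v \<bullet> v = 1"
    unfolding v_def using w(1) ww by (simp_all add: real_sqrt_mult[symmetric])
  have Av: "A *\<^sub>v v = e \<cdot>\<^sub>v v"
    unfolding v_def using w A by (simp add: mult_mat_vec smult_smult_assoc mult.commute)
  obtain H where H: "orth_mat (Suc n) H" and colH: "col H 0 = v"
    using unit_vec_orth_mat_first_col[OF v vv] by auto
  have Hc: "H \<in> carrier_mat (Suc n) (Suc n)"
    using H unfolding orth_mat_def by auto
  define B where "B = transpose_mat H * A * H"
  have B: "B \<in> carrier_mat (Suc n) (Suc n)"
    unfolding B_def using Hc A by auto
  have symB: "sym_mat B"
    using sym_mat_congruence[of "transpose_mat H" "Suc n" "Suc n" A] Hc A sym
    unfolding B_def by simp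
  define A' where "A' = mat n n (\<lambda>(i, j). B $$ (Suc i, Suc j))"
  have A': "A' \<in> carrier_mat n n"
    unfolding A'_def by simp
  have "B = block_diag1 e A'"
    unfolding A'_def using B symB orth_mat_conj_eigenvector_col[OF H A colH Av]
    by (intro sym_mat_eq_block_diag1) (auto simp: B_def)
  moreover have "sym_mat A'"
    using sym_mat_entry[OF B symB] unfolding A'_def sym_mat_def by (intro eq_matI) auto
  ultimately show ?thesis
    using H A' unfolding B_def by blast
qed

theorem sym_mat_orth_diagonalizable:
  fixes A :: "real mat"
  assumes "A \<in> carrier_mat n n" and "sym_mat A"
  shows "\<exists>Q. orth_mat n Q \<and> diagonal_mat (transpose_mat Q * A * Q)"
  using assms
proof (induction n arbitrary: A)
  case 0
  then show ?case
    by (intro exI[of _ "1\<^sub>m 0"]) (auto simp: orth_mat_def diagonal_mat_def)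
next
  case (Suc n A)
  obtain H e A' where H: "orth_mat (Suc n) H" and A': "A' \<in> carrier_mat n n" "sym_mat A'"
    and HAH: "transpose_mat H * A * H = block_diag1 e A'"
    using sym_mat_deflation[OF Suc.prems] by blast
  obtain Q' where Q': "orth_mat n Q'" and diag: "diagonal_mat (transpose_mat Q' * A' * Q')"
    using Suc.IH[OF A'] by blast
  have Q'c: "Q' \<in> carrier_mat n n"
    using Q' unfolding orth_mat_def by auto
  define B where "B = block_diag1 1 Q'"
  have B: "orth_mat (Suc n) B"
    unfolding B_def by (rule orth_mat_block_diag1[OF Q'])
  have carr: "H \<in> carrier_mat (Suc n) (Suc n)" "B \<in> carrier_mat (Suc n) (Suc n)"
    using H B unfolding orth_mat_def by auto
  have "transpose_mat (H * B) * A * (H * B) = transpose_mat B * (transpose_mat H * A * H) * B"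
    unfolding transpose_mult[OF carr]
    by (rule assoc_mult_mat_5) (use carr Suc.prems(1) in auto)
  also have "\<dots> = block_diag1 e (transpose_mat Q' * A' * Q')"
    unfolding HAH B_def transpose_block_diag1[OF Q'c] using Q'c A'(1)
    by (simp add: block_diag1_mult[of _ n])
  also have "diagonal_mat \<dots>"
    by (rule diagonal_mat_block_diag1[of _ n, OF _ diag]) (use Q'c A' in simp)
  finally have "diagonal_mat (transpose_mat (H * B) * A * (H * B))" .
  then show ?case
    using orth_mat_mult[OF H B] by blast
qed

lemma orth_mat_conj_cancel:
  fixes B :: "real mat"
  assumes Q: "orth_mat N Q" and B: "B \<in> carrier_mat N N"
  shows "Q * (transpose_mat Q * B * Q) * transpose_mat Q = B"
proof -
  have Qc: "Q \<in> carrier_mat N N" and Qt: "transpose_mat Q \<in> carrier_mat N N"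
    and QQt: "Q * transpose_mat Q = 1\<^sub>m N"
    using Q unfolding orth_mat_def by auto
  have "Q * (transpose_mat Q * B * Q) * transpose_mat Q
      = (Q * transpose_mat Q) * B * (Q * transpose_mat Q)"
    using assoc_mult_mat_5[OF Qc Qt B Qc Qt] by simp
  then show ?thesis
    using B unfolding QQt by simp
qed

lemma orth_mat_conj_diag_entry:
  fixes Q S :: "real mat"
  assumes Q: "Q \<in> carrier_mat N N" and S: "S \<in> carrier_mat N N" and i: "i < N"
  shows "(transpose_mat Q * S * Q) $$ (i, i) = col Q i \<bullet> (S *\<^sub>v col Q i)"
proof -
  have "transpose_mat Q * S * Q = transpose_mat Q * (S * Q)"
    by (rule assoc_mult_mat) (use Q S in auto)
  then show ?thesis
    using Q S i by (simp add: mult_mat_vec_def)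
qed

lemma diagonal_mat_eq_mat_diag:
  assumes "L \<in> carrier_mat N N" and "diagonal_mat L"
  shows "L = mat_diag N (\<lambda>i. L $$ (i, i))"
  using assms unfolding diagonal_mat_def mat_diag_def by (intro eq_matI) auto

lemma orth_diagonal_col_eigenvector:
  fixes B :: "real mat"
  assumes Q: "orth_mat N Q" and B: "B \<in> carrier_mat N N"
    and diag: "diagonal_mat (transpose_mat Q * B * Q)" and i: "i < N"
  shows "B *\<^sub>v col Q i = (transpose_mat Q * B * Q) $$ (i, i) \<cdot>\<^sub>v col Q i"
    and "col Q i \<bullet> col Q i = 1"
proof -
  define L where "L = transpose_mat Q * B * Q"
  have Qc: "Q \<in> carrier_mat N N" and Qt: "transpose_mat Q \<in> carrier_mat N N"
    and QtQ: "transpose_mat Q * Q = 1\<^sub>m N"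
    using Q unfolding orth_mat_def by auto
  have L: "L \<in> carrier_mat N N"
    unfolding L_def using Qc B by simp
  have QtQ_entry: "row (transpose_mat Q) j \<bullet> col Q i = (if j = i then 1 else 0)" if "j < N" for j
    using arg_cong[OF QtQ, of "\<lambda>M. M $$ (j, i)"] that Qc i by simp
  have Qt_col: "transpose_mat Q *\<^sub>v col Q i = unit_vec N i"
    using Qc i QtQ_entry by (intro eq_vecI) (auto simp: unit_vec_def)
  have L_unit: "L *\<^sub>v unit_vec N i = L $$ (i, i) \<cdot>\<^sub>v unit_vec N i"
    using L i diag unfolding L_def[symmetric] diagonal_mat_def
    by (intro eq_vecI) (auto simp: scalar_prod_right_unit)
  have Q_unit: "Q *\<^sub>v unit_vec N i = col Q i"
    using Qc i by (intro eq_vecI) auto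
  have "B *\<^sub>v col Q i = (Q * L * transpose_mat Q) *\<^sub>v col Q i"
    unfolding L_def using orth_mat_conj_cancel[OF Q B] by simp
  also have "\<dots> = (Q * L) *\<^sub>v (transpose_mat Q *\<^sub>v col Q i)"
    by (rule assoc_mult_mat_vec[of _ N N]) (use Qc L i in auto)
  also have "\<dots> = Q *\<^sub>v (L *\<^sub>v (transpose_mat Q *\<^sub>v col Q i))"
    by (rule assoc_mult_mat_vec[of _ N N]) (use Qc L i in auto)
  also have "\<dots> = L $$ (i, i) \<cdot>\<^sub>v col Q i"
    unfolding Qt_col L_unit using Qc by (simp add: mult_mat_vec Q_unit)
  finally show "B *\<^sub>v col Q i = (transpose_mat Q * B * Q) $$ (i, i) \<cdot>\<^sub>v col Q i"
    unfolding L_def .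
  show "col Q i \<bullet> col Q i = 1"
    using QtQ_entry[OF i] Qc i by simp
qed

section \<open>Square roots and inverses of positive definite matrices\<close>

lemma pos_semidef_sqrt_exists:
  fixes S :: "real mat"
  assumes S: "pos_semidef N S"
  shows "\<exists>R. pos_semidef N R \<and> R * R = S"
proof -
  have Sc: "S \<in> carrier_mat N N"
    using S unfolding pos_semidef_def by auto
  obtain Q where Q: "orth_mat N Q" and diag: "diagonal_mat (transpose_mat Q * S * Q)"
    using sym_mat_orth_diagonalizable[OF Sc] S unfolding pos_semidef_def by blast
  have Qc: "Q \<in> carrier_mat N N" and Qt: "transpose_mat Q \<in> carrier_mat N N"
    and QtQ: "transpose_mat Q * Q = 1\<^sub>m N"
    using Q unfolding orth_mat_def by auto
  define L where "L = transpose_mat Q * S * Q"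
  have L_nonneg: "L $$ (i, i) \<ge> 0" if "i < N" for i
    unfolding L_def orth_mat_conj_diag_entry[OF Qc Sc that]
    using S Qc that unfolding pos_semidef_def by simp
  define D where "D = mat_diag N (\<lambda>i. sqrt (L $$ (i, i)))"
  have D: "D \<in> carrier_mat N N"
    unfolding D_def by simp
  have L: "L = mat_diag N (\<lambda>i. L $$ (i, i))"
    unfolding L_def by (rule diagonal_mat_eq_mat_diag) (use diag Qc Sc in auto)
  have "D * D = mat_diag N (\<lambda>i. sqrt (L $$ (i, i)) * sqrt (L $$ (i, i)))"
    unfolding D_def by (rule mat_diag_diag)
  also have "\<dots> = mat_diag N (\<lambda>i. L $$ (i, i))"
    unfolding mat_diag_def by (rule cong_mat) (simp_all add: L_nonneg)
  also have "\<dots> = L"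
    by (rule L[symmetric])
  finally have DD: "D * D = L" .
  define R where "R = Q * D * transpose_mat Q"
  have "R * R = (Q * D) * (transpose_mat Q * (Q * D)) * transpose_mat Q"
    unfolding R_def by (rule assoc_mult_mat_4) (use Qc D Qt in auto)
  also have "transpose_mat Q * (Q * D) = D"
    using assoc_mult_mat[OF Qt Qc D] QtQ D by simp
  also have "Q * D * D = Q * L"
    using assoc_mult_mat[OF Qc D D] DD by simp
  also have "Q * L * transpose_mat Q = S"
    unfolding L_def by (rule orth_mat_conj_cancel[OF Q Sc])
  finally have "R * R = S" .
  moreover have "pos_semidef N R"
    unfolding R_def D_def
    by (rule pos_semidef_congruence[OF pos_semidef_mat_diag Qc]) (simp add: L_nonneg)
  ultimately show ?thesis
    by blast
qed

lemma pos_semidef_sqrt_diff_eigenvalue: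
  fixes R S :: "real mat"
  assumes R: "pos_semidef N R" and S: "pos_semidef N S" and RS: "R * R = S * S"
    and v: "v \<in> carrier_vec N" "v \<noteq> 0\<^sub>v N" and eigen: "(R - S) *\<^sub>v v = \<mu> \<cdot>\<^sub>v v"
  shows "\<mu> = 0"
proof (rule ccontr)
  assume "\<mu> \<noteq> 0"
  have Rc: "R \<in> carrier_mat N N" and symR: "sym_mat R"
    and Sc: "S \<in> carrier_mat N N" and symS: "sym_mat S"
    using R S unfolding pos_semidef_def by auto
  have Rv: "R *\<^sub>v v \<in> carrier_vec N" and Sv: "S *\<^sub>v v \<in> carrier_vec N"
    using Rc Sc v by auto
  have diff: "(R - S) *\<^sub>v x = R *\<^sub>v x - S *\<^sub>v x" if "x \<in> carrier_vec N" for x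
    by (rule minus_mult_distrib_mat_vec[OF Rc Sc that])
  \<comment> \<open>\<open>v\<^sup>T R (R - S) v + v\<^sup>T (R - S) S v = v\<^sup>T (R\<^sup>2 - S\<^sup>2) v = 0\<close>, while the left-hand side
    equals \<open>\<mu> (v\<^sup>T R v + v\<^sup>T S v)\<close>.\<close>
  have "v \<bullet> (R *\<^sub>v ((R - S) *\<^sub>v v)) + (S *\<^sub>v v) \<bullet> ((R - S) *\<^sub>v v)
      = v \<bullet> (R *\<^sub>v (R *\<^sub>v v)) - v \<bullet> (S *\<^sub>v (S *\<^sub>v v))"
  proof -
    have "(S *\<^sub>v v) \<bullet> (R *\<^sub>v v) = v \<bullet> (R *\<^sub>v (S *\<^sub>v v))"
      using sym_mat_bilinear_comm[OF Rc symR Sv v(1)] by simp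
    moreover have "(S *\<^sub>v v) \<bullet> (S *\<^sub>v v) = v \<bullet> (S *\<^sub>v (S *\<^sub>v v))"
      using sym_mat_bilinear_comm[OF Sc symS Sv v(1)] by simp
    ultimately show ?thesis
      unfolding diff[OF v(1)] using Rc Sc v Rv Sv
      by (simp add: mult_minus_distrib_mat_vec[OF Rc Rv Sv] scalar_prod_minus_distrib[of _ N])
  qed
  also have "\<dots> = 0"
    using assoc_mult_mat_vec[OF Rc Rc v(1)] assoc_mult_mat_vec[OF Sc Sc v(1)] RS by simp
  finally have "\<mu> * (v \<bullet> (R *\<^sub>v v) + v \<bullet> (S *\<^sub>v v)) = 0"
    unfolding eigen using Rc v Sv by (simp add: mult_mat_vec comm_scalar_prod[OF Sv v(1)] algebra_simps)
  then have "v \<bullet> (R *\<^sub>v v) + v \<bullet> (S *\<^sub>v v) = 0"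
    using \<open>\<mu> \<noteq> 0\<close> by simp
  moreover have "v \<bullet> (R *\<^sub>v v) \<ge> 0" and "v \<bullet> (S *\<^sub>v v) \<ge> 0"
    using R S v unfolding pos_semidef_def by auto
  ultimately have "R *\<^sub>v v = 0\<^sub>v N" and "S *\<^sub>v v = 0\<^sub>v N"
    using pos_semidef_quadratic_form_eq_0D[OF R v(1)] pos_semidef_quadratic_form_eq_0D[OF S v(1)]
    by auto
  then have "\<mu> \<cdot>\<^sub>v v = 0\<^sub>v N"
    unfolding eigen[symmetric] diff[OF v(1)] by simp
  then have "(\<mu> \<cdot>\<^sub>v v) \<bullet> v = 0"
    using v(1) by simp
  then have "\<mu> * (v \<bullet> v) = 0"
    using v(1) by simp
  then show False
    using \<open>\<mu> \<noteq> 0\<close> v scalar_prod_self_eq_0_iff by auto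
qed

lemma pos_semidef_sqrt_unique:
  fixes R S :: "real mat"
  assumes R: "pos_semidef N R" and S: "pos_semidef N S" and RS: "R * R = S * S"
  shows "R = S"
proof -
  have Rc: "R \<in> carrier_mat N N" and Sc: "S \<in> carrier_mat N N"
    using R S unfolding pos_semidef_def by auto
  have B: "R - S \<in> carrier_mat N N"
    using Sc by (simp add: minus_carrier_mat)
  have "sym_mat (R - S)"
    using R S transpose_minus[OF Rc Sc] unfolding pos_semidef_def sym_mat_def by simp
  then obtain Q where Q: "orth_mat N Q" and diag: "diagonal_mat (transpose_mat Q * (R - S) * Q)"
    using sym_mat_orth_diagonalizable[OF B] by blast
  define L where "L = transpose_mat Q * (R - S) * Q"
  have Qc: "Q \<in> carrier_mat N N"
    using Q unfolding orth_mat_def by auto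
  have L0: "L $$ (i, i) = 0" if i: "i < N" for i
  proof (rule pos_semidef_sqrt_diff_eigenvalue[OF R S RS])
    show "col Q i \<in> carrier_vec N"
      using Qc col_dim[of Q i] by simp
    show "col Q i \<noteq> 0\<^sub>v N"
      using orth_diagonal_col_eigenvector(2)[OF Q B diag i] Qc by auto
    show "(R - S) *\<^sub>v col Q i = L $$ (i, i) \<cdot>\<^sub>v col Q i"
      unfolding L_def by (rule orth_diagonal_col_eigenvector(1)[OF Q B diag i])
  qed
  have L: "L \<in> carrier_mat N N"
    unfolding L_def using Qc B by simp
  have "L = mat_diag N (\<lambda>i. L $$ (i, i))"
    by (rule diagonal_mat_eq_mat_diag[OF L diag[folded L_def]])
  also have "\<dots> = 0\<^sub>m N N"
    using L0 by (auto simp: mat_diag_def intro!: eq_matI)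
  finally have "L = 0\<^sub>m N N" .
  then have "R - S = 0\<^sub>m N N"
    using orth_mat_conj_cancel[OF Q B] Qc unfolding L_def by simp
  show ?thesis
  proof (rule eq_matI)
    fix i j assume "i < dim_row S" "j < dim_col S"
    then have "(R - S) $$ (i, j) = 0"
      using \<open>R - S = 0\<^sub>m N N\<close> Sc by simp
    then show "R $$ (i, j) = S $$ (i, j)"
      using \<open>i < dim_row S\<close> \<open>j < dim_col S\<close> by simp
  qed (use Rc Sc in auto)
qed

lemma psd_sqrt_correct:
  assumes "pos_semidef N S"
  shows "pos_semidef N (psd_sqrt N S)" and "psd_sqrt N S * psd_sqrt N S = S"
proof -
  obtain R where R: "pos_semidef N R" "R * R = S"
    using pos_semidef_sqrt_exists[OF assms] by blast
  have "\<exists>!R. pos_semidef N R \<and> R * R = S"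
  proof (rule ex1I[of _ R])
    fix R' assume "pos_semidef N R' \<and> R' * R' = S"
    then show "R' = R"
      using pos_semidef_sqrt_unique[of N R' R] R by simp
  qed (use R in simp)
  then have "pos_semidef N (psd_sqrt N S) \<and> psd_sqrt N S * psd_sqrt N S = S"
    unfolding psd_sqrt_def by (rule theI')
  then show "pos_semidef N (psd_sqrt N S)" and "psd_sqrt N S * psd_sqrt N S = S"
    by auto
qed

lemma pos_def_psd_sqrt:
  assumes S: "pos_def N S"
  shows "pos_def N (psd_sqrt N S)"
proof -
  define R where "R = psd_sqrt N S"
  have psd: "pos_semidef N R" and RR: "R * R = S"
    using psd_sqrt_correct[OF pos_def_imp_pos_semidef[OF S]] unfolding R_def by auto
  have Rc: "R \<in> carrier_mat N N"
    using psd unfolding pos_semidef_def by auto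
  have "v \<bullet> (R *\<^sub>v v) \<noteq> 0" if v: "v \<in> carrier_vec N" "v \<noteq> 0\<^sub>v N" for v
  proof
    assume "v \<bullet> (R *\<^sub>v v) = 0"
    then have "R *\<^sub>v v = 0\<^sub>v N"
      by (rule pos_semidef_quadratic_form_eq_0D[OF psd v(1)])
    then have "S *\<^sub>v v = 0\<^sub>v N"
      unfolding RR[symmetric] using assoc_mult_mat_vec[OF Rc Rc v(1)] Rc
      by (simp add: mult_mat_vec_zero)
    then show False
      using pos_def_mult_vec_eq_0D[OF S v(1)] v(2) by simp
  qed
  then show ?thesis
    using psd unfolding R_def pos_semidef_def pos_def_def by (auto simp: order_le_less)
qed

lemma mat_inv_correct:
  fixes M :: "real mat"
  assumes M: "M \<in> carrier_mat N N"
    and ker: "\<And>v. v \<in> carrier_vec N \<Longrightarrow> M *\<^sub>v v = 0\<^sub>v N \<Longrightarrow> v = 0\<^sub>v N"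
  shows "mat_inv N M \<in> carrier_mat N N" and "M * mat_inv N M = 1\<^sub>m N" and "mat_inv N M * M = 1\<^sub>m N"
proof -
  have "det M \<noteq> 0"
    using det_0_iff_vec_prod_zero_field[OF M] ker by auto
  from det_non_zero_imp_unit[OF M this, unfolded Units_def, of "()"]
  obtain B where B: "B \<in> carrier_mat N N" "M * B = 1\<^sub>m N" "B * M = 1\<^sub>m N"
    by (auto simp: ring_mat_def)
  have "B' = B" if "B' \<in> carrier_mat N N" "M * B' = 1\<^sub>m N" "B' * M = 1\<^sub>m N" for B'
  proof -
    have "B' = B' * (M * B)"
      using B that by simp
    also have "\<dots> = (B' * M) * B"
      using assoc_mult_mat[OF that(1) M B(1)] by simp
    finally show ?thesis
      using that B by simp
  qed
  with B have "\<exists>!B. B \<in> carrier_mat N N \<and> M * B = 1\<^sub>m N \<and> B * M = 1\<^sub>m N"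
    by blast
  then have "mat_inv N M \<in> carrier_mat N N \<and> M * mat_inv N M = 1\<^sub>m N \<and> mat_inv N M * M = 1\<^sub>m N"
    unfolding mat_inv_def by (rule theI')
  then show "mat_inv N M \<in> carrier_mat N N" and "M * mat_inv N M = 1\<^sub>m N"
    and "mat_inv N M * M = 1\<^sub>m N"
    by auto
qed

lemma sym_mat_inverse:
  fixes M B :: "real mat"
  assumes M: "M \<in> carrier_mat N N" and sym: "sym_mat M"
    and B: "B \<in> carrier_mat N N" "M * B = 1\<^sub>m N" "B * M = 1\<^sub>m N"
  shows "sym_mat B"
proof -
  have Bt: "transpose_mat B \<in> carrier_mat N N"
    using B by simp
  have "transpose_mat B * M = transpose_mat (M * B)"
    using transpose_mult[OF M B(1)] sym unfolding sym_mat_def by simp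
  then have BtM: "transpose_mat B * M = 1\<^sub>m N"
    unfolding B(2) by simp
  have "transpose_mat B = transpose_mat B * (M * B)"
    unfolding B(2) using Bt by simp
  also have "\<dots> = (transpose_mat B * M) * B"
    using assoc_mult_mat[OF Bt M B(1)] by simp
  finally show ?thesis
    unfolding sym_mat_def BtM using B by simp
qed

lemma pos_def_mat_inv:
  fixes P :: "real mat"
  assumes P: "pos_def N P"
  shows "pos_def N (mat_inv N P)" and "P * mat_inv N P = 1\<^sub>m N"
proof -
  have Pc: "P \<in> carrier_mat N N" and sym: "sym_mat P"
    using P unfolding pos_def_def by auto
  note inv = mat_inv_correct[OF Pc pos_def_mult_vec_eq_0D[OF P]]
  show "P * mat_inv N P = 1\<^sub>m N"
    by (rule inv(2))
  have "a \<bullet> (mat_inv N P *\<^sub>v a) > 0" if a: "a \<in> carrier_vec N" "a \<noteq> 0\<^sub>v N" for a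
  proof -
    define b where "b = mat_inv N P *\<^sub>v a"
    have b: "b \<in> carrier_vec N"
      unfolding b_def using inv(1) a by simp
    have Pb: "P *\<^sub>v b = a"
      unfolding b_def using assoc_mult_mat_vec[OF Pc inv(1) a(1)] inv(2) a by simp
    have "b \<noteq> 0\<^sub>v N"
    proof
      assume "b = 0\<^sub>v N"
      then have "a = 0\<^sub>v N"
        unfolding Pb[symmetric] using Pc by (simp add: mult_mat_vec_zero)
      then show False
        using a(2) by contradiction
    qed
    then have "b \<bullet> (P *\<^sub>v b) > 0"
      using P b unfolding pos_def_def by auto
    then show ?thesis
      unfolding Pb b_def[symmetric] using comm_scalar_prod[OF b a(1)] by simp
  qed
  then show "pos_def N (mat_inv N P)"
    using inv(1) sym_mat_inverse[OF Pc sym inv] unfolding pos_def_def by blast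
qed

lemma pos_def_dual_cauchy_schwarz:
  fixes P :: "real mat"
  assumes P: "pos_def N P" and a: "a \<in> carrier_vec N" and z: "z \<in> carrier_vec N"
  shows "(a \<bullet> z)\<^sup>2 \<le> (a \<bullet> (mat_inv N P *\<^sub>v a)) * (z \<bullet> (P *\<^sub>v z))"
proof -
  have Pc: "P \<in> carrier_mat N N" and symP: "sym_mat P" and psd: "pos_semidef N P"
    using P pos_def_imp_pos_semidef[OF P] unfolding pos_def_def by auto
  have Pi: "mat_inv N P \<in> carrier_mat N N"
    using pos_def_mat_inv(1)[OF P] unfolding pos_def_def by auto
  define c where "c = mat_inv N P *\<^sub>v a"
  have c: "c \<in> carrier_vec N"
    unfolding c_def using Pi a by simp
  have Pc_a: "P *\<^sub>v c = a"
    unfolding c_def using assoc_mult_mat_vec[OF Pc Pi a] pos_def_mat_inv(2)[OF P] a by simp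
  have "c \<bullet> (P *\<^sub>v z) = z \<bullet> (P *\<^sub>v c)"
    by (rule sym_mat_bilinear_comm[OF Pc symP z c])
  also have "\<dots> = a \<bullet> z"
    unfolding Pc_a by (rule comm_scalar_prod[OF z a])
  finally have cz: "c \<bullet> (P *\<^sub>v z) = a \<bullet> z" .
  have cc: "c \<bullet> (P *\<^sub>v c) = a \<bullet> (mat_inv N P *\<^sub>v a)"
    unfolding Pc_a c_def[symmetric] by (rule comm_scalar_prod[OF c a])
  show ?thesis
    using pos_semidef_cauchy_schwarz[OF psd c z] unfolding cz cc .
qed

section \<open>Ellipsoids\<close>

lemma psd_sqrt_mult_vec_in_ellipsoid:
  fixes \<Sigma> :: "real mat"
  assumes R: "psd_sqrt m \<Sigma> \<in> carrier_mat m m" and y: "y \<in> carrier_vec m"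
    and yy: "y \<bullet> y \<le> \<rho>\<^sup>2" and \<rho>: "\<rho> \<ge> 0"
  shows "psd_sqrt m \<Sigma> *\<^sub>v y \<in> ellipsoid m (0\<^sub>v m) \<Sigma> \<rho>"
proof (cases "\<rho> = 0")
  case True
  then have "y = 0\<^sub>v m"
    using yy scalar_prod_self_nonneg[of y] scalar_prod_self_eq_0_iff[OF y] by simp
  then show ?thesis
    unfolding ellipsoid_def using True R
    by (intro CollectI exI[of _ "0\<^sub>v m"]) (auto simp: mult_mat_vec_zero intro!: eq_vecI)
next
  case False
  then have \<rho>_pos: "\<rho> > 0"
    using \<rho> by simp
  define u where "u = (1 / \<rho>) \<cdot>\<^sub>v y"
  have u: "u \<in> carrier_vec m"
    unfolding u_def using y by simp
  have "u \<bullet> u = (y \<bullet> y) / \<rho>\<^sup>2"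
    unfolding u_def using y by (simp add: power2_eq_square)
  also have "\<dots> \<le> 1"
    using yy \<rho>_pos by simp
  finally have "sqrt (u \<bullet> u) \<le> 1"
    by simp
  moreover have "psd_sqrt m \<Sigma> *\<^sub>v y = 0\<^sub>v m + \<rho> \<cdot>\<^sub>v (psd_sqrt m \<Sigma> *\<^sub>v u)"
    unfolding u_def using R y \<rho>_pos by (simp add: mult_mat_vec smult_smult_assoc)
  ultimately show ?thesis
    unfolding ellipsoid_def using u by blast
qed

lemma ellipsoid_memI:
  fixes \<Sigma> :: "real mat"
  assumes \<Sigma>: "pos_def m \<Sigma>" and x: "x \<in> carrier_vec m" and \<rho>: "\<rho> \<ge> 0"
    and bound: "\<And>w. w \<in> carrier_vec m \<Longrightarrow> (w \<bullet> x)\<^sup>2 \<le> \<rho>\<^sup>2 * (w \<bullet> (\<Sigma> *\<^sub>v w))"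
  shows "x \<in> ellipsoid m (0\<^sub>v m) \<Sigma> \<rho>"
proof -
  define R where "R = psd_sqrt m \<Sigma>"
  have R: "pos_def m R"
    unfolding R_def by (rule pos_def_psd_sqrt[OF \<Sigma>])
  have RR: "R * R = \<Sigma>"
    unfolding R_def by (rule psd_sqrt_correct(2)[OF pos_def_imp_pos_semidef[OF \<Sigma>]])
  have Rc: "R \<in> carrier_mat m m"
    using R unfolding pos_def_def by auto
  define Ri where "Ri = mat_inv m R"
  have Ri: "Ri \<in> carrier_mat m m" "sym_mat Ri" and RRi: "R * Ri = 1\<^sub>m m"
    using pos_def_mat_inv[OF R] unfolding Ri_def pos_def_def by auto
  \<comment> \<open>With \<open>y = R\<^sup>-\<^sup>1 x\<close> and the test vector \<open>w = \<Sigma>\<^sup>-\<^sup>1 x = R\<^sup>-\<^sup>1 y\<close>, both sides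
    of the bound become \<open>|y|\<^sup>2\<close>.\<close>
  define y where "y = Ri *\<^sub>v x"
  define w where "w = Ri *\<^sub>v y"
  have y: "y \<in> carrier_vec m" and w: "w \<in> carrier_vec m"
    unfolding y_def w_def using Ri x by auto
  have R_Ri: "R *\<^sub>v (Ri *\<^sub>v v) = v" if "v \<in> carrier_vec m" for v
    using assoc_mult_mat_vec[OF Rc Ri(1) that] RRi that by simp
  have Ry: "R *\<^sub>v y = x"
    unfolding y_def by (rule R_Ri[OF x])
  have \<Sigma>w: "\<Sigma> *\<^sub>v w = x"
    unfolding RR[symmetric] w_def using assoc_mult_mat_vec[OF Rc Rc] R_Ri[OF y] Ry Ri y by simp
  have "w \<bullet> x = x \<bullet> (Ri *\<^sub>v y)"
    unfolding w_def by (rule comm_scalar_prod) (use Ri y x in auto)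
  also have "\<dots> = y \<bullet> (Ri *\<^sub>v x)"
    by (rule sym_mat_bilinear_comm[OF Ri y x])
  also have "\<dots> = y \<bullet> y"
    by (simp add: y_def)
  finally have "(y \<bullet> y)\<^sup>2 \<le> \<rho>\<^sup>2 * (y \<bullet> y)"
    using bound[OF w] unfolding \<Sigma>w by simp
  then have "y \<bullet> y \<le> \<rho>\<^sup>2"
    using scalar_prod_self_nonneg[of y]
    by (cases "y \<bullet> y = 0") (auto simp: power2_eq_square mult_le_cancel_right_pos)
  then show ?thesis
    using psd_sqrt_mult_vec_in_ellipsoid[OF Rc[unfolded R_def] y _ \<rho>] Ry unfolding R_def by simp
qed

lemma ellipsoid_contains_image:
  fixes P S :: "real mat"
  assumes P: "pos_def N P" and S: "S \<in> carrier_mat m N"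
    and inj: "\<And>w. w \<in> carrier_vec m \<Longrightarrow> transpose_mat S *\<^sub>v w = 0\<^sub>v N \<Longrightarrow> w = 0\<^sub>v m"
    and z: "z \<in> carrier_vec N" and zP: "z \<bullet> (P *\<^sub>v z) \<le> \<rho>\<^sup>2" and \<rho>: "\<rho> \<ge> 0"
  shows "S *\<^sub>v z \<in> ellipsoid m (0\<^sub>v m) (S * mat_inv N P * transpose_mat S) \<rho>"
proof (rule ellipsoid_memI)
  have Pi: "pos_def N (mat_inv N P)"
    by (rule pos_def_mat_inv(1)[OF P])
  then have Pic: "mat_inv N P \<in> carrier_mat N N"
    unfolding pos_def_def by auto
  show "pos_def m (S * mat_inv N P * transpose_mat S)"
    by (rule pos_def_congruence[OF Pi S inj])
  fix w :: "real vec"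
  assume w: "w \<in> carrier_vec m"
  have Stw: "transpose_mat S *\<^sub>v w \<in> carrier_vec N"
    using S w by simp
  have "(w \<bullet> (S *\<^sub>v z))\<^sup>2 = ((transpose_mat S *\<^sub>v w) \<bullet> z)\<^sup>2"
    using transpose_vec_mult_scalar[OF S z w] by simp
  also have "\<dots> \<le> ((transpose_mat S *\<^sub>v w) \<bullet> (mat_inv N P *\<^sub>v (transpose_mat S *\<^sub>v w)))
      * (z \<bullet> (P *\<^sub>v z))"
    by (rule pos_def_dual_cauchy_schwarz[OF P Stw z])
  also have "\<dots> = (w \<bullet> ((S * mat_inv N P * transpose_mat S) *\<^sub>v w)) * (z \<bullet> (P *\<^sub>v z))"
    using quadratic_form_congruence[OF S Pic w] by simp
  also have "\<dots> \<le> \<rho>\<^sup>2 * (w \<bullet> ((S * mat_inv N P * transpose_mat S) *\<^sub>v w))"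
    using zP pos_def_imp_pos_semidef[OF pos_def_congruence[OF Pi S inj]] w
    unfolding pos_semidef_def by (simp add: mult.commute mult_right_mono)
  finally show "(w \<bullet> (S *\<^sub>v z))\<^sup>2 \<le> \<rho>\<^sup>2 * (w \<bullet> ((S * mat_inv N P * transpose_mat S) *\<^sub>v w))" .
qed (use S z \<rho> in auto)

lemma I_sel_carrier: "I_sel m N \<in> carrier_mat m N"
  unfolding I_sel_def by simp

lemma I_sel_mult_vec:
  assumes z: "z \<in> carrier_vec N" and mN: "m \<le> N"
  shows "I_sel m N *\<^sub>v z = vec m (\<lambda>a. z $ a)"
proof (rule eq_vecI)
  fix a assume "a < dim_vec (vec m (\<lambda>a. z $ a))"
  then have a: "a < m"
    by simp
  have "(I_sel m N *\<^sub>v z) $ a = (\<Sum>j\<in>{0..<N}. (if a = j then 1 else 0) * z $ j)"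
    using a z unfolding I_sel_def by (simp add: scalar_prod_def)
  also have "\<dots> = (\<Sum>j\<in>{0..<N}. if j = a then z $ a else 0)"
    by (rule sum.cong) auto
  finally show "(I_sel m N *\<^sub>v z) $ a = vec m (\<lambda>a. z $ a) $ a"
    using a mN by simp
qed (simp add: I_sel_def)

lemma transpose_I_sel_mult_vec_eq_0D:
  assumes w: "w \<in> carrier_vec m" and mN: "m \<le> N" and zero: "transpose_mat (I_sel m N) *\<^sub>v w = 0\<^sub>v N"
  shows "w = 0\<^sub>v m"
proof (rule eq_vecI)
  fix j assume "j < dim_vec (0\<^sub>v m :: real vec)"
  then have j: "j < m"
    by simp
  have "(transpose_mat (I_sel m N) *\<^sub>v w) $ j = (\<Sum>i\<in>{0..<m}. (if i = j then 1 else 0) * w $ i)"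
    using j mN w unfolding I_sel_def by (simp add: scalar_prod_def)
  also have "\<dots> = (\<Sum>i\<in>{0..<m}. if i = j then w $ j else 0)"
    by (rule sum.cong) auto
  finally show "w $ j = 0\<^sub>v m $ j"
    using zero j mN by simp
qed (use w in simp)

lemma P_norm_sq:
  assumes "pos_semidef N P" and "z \<in> carrier_vec N"
  shows "P_norm P z \<ge> 0" and "(P_norm P z)\<^sup>2 = z \<bullet> (P *\<^sub>v z)"
  using assms unfolding P_norm_def pos_semidef_def by auto

section \<open>Lyapunov functions\<close>

lemma lyapunov_quadratic_form_nonpos:
  fixes A P D :: "real mat"
  assumes A: "A \<in> carrier_mat N N" and P: "P \<in> carrier_mat N N" and D: "D \<in> carrier_mat r N"
    and lyap: "transpose_mat A * P + P * A + transpose_mat D * D = 0\<^sub>m N N"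
    and z: "z \<in> carrier_vec N"
  shows "(A *\<^sub>v z) \<bullet> (P *\<^sub>v z) + z \<bullet> (P *\<^sub>v (A *\<^sub>v z)) \<le> 0"
proof -
  have At: "transpose_mat A \<in> carrier_mat N N" and Dt: "transpose_mat D \<in> carrier_mat N r"
    using A D by auto
  have Az: "A *\<^sub>v z \<in> carrier_vec N" and Pz: "P *\<^sub>v z \<in> carrier_vec N"
    and Dz: "D *\<^sub>v z \<in> carrier_vec r"
    using A P D z by auto
  have "(A *\<^sub>v z) \<bullet> (P *\<^sub>v z) = z \<bullet> (transpose_mat A *\<^sub>v (P *\<^sub>v z))"
    using transpose_vec_mult_scalar[OF A z Pz] comm_scalar_prod[OF Az Pz]
      comm_scalar_prod[of z N "transpose_mat A *\<^sub>v (P *\<^sub>v z)"] At Pz z by simp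
  also have "\<dots> = z \<bullet> ((transpose_mat A * P) *\<^sub>v z)"
    using assoc_mult_mat_vec[OF At P z] by simp
  finally have AP: "(A *\<^sub>v z) \<bullet> (P *\<^sub>v z) = z \<bullet> ((transpose_mat A * P) *\<^sub>v z)" .
  have PA: "z \<bullet> (P *\<^sub>v (A *\<^sub>v z)) = z \<bullet> ((P * A) *\<^sub>v z)"
    using assoc_mult_mat_vec[OF P A z] by simp
  have "z \<bullet> ((transpose_mat D * D) *\<^sub>v z) = z \<bullet> (transpose_mat D *\<^sub>v (D *\<^sub>v z))"
    using assoc_mult_mat_vec[OF Dt D z] by simp
  also have "\<dots> = (D *\<^sub>v z) \<bullet> (D *\<^sub>v z)"
    using transpose_vec_mult_scalar[OF D z Dz] comm_scalar_prod[of z N] Dt Dz z by simp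
  finally have DD: "z \<bullet> ((transpose_mat D * D) *\<^sub>v z) = (D *\<^sub>v z) \<bullet> (D *\<^sub>v z)" .
  have "z \<bullet> ((transpose_mat A * P) *\<^sub>v z) + z \<bullet> ((P * A) *\<^sub>v z)
      + z \<bullet> ((transpose_mat D * D) *\<^sub>v z)
      = z \<bullet> ((transpose_mat A * P + P * A + transpose_mat D * D) *\<^sub>v z)"
    using At P A Dt D z
    by (simp add: add_mult_distrib_mat_vec[of _ N N] scalar_prod_add_distrib[of _ N])
  also have "\<dots> = 0"
    unfolding lyap using z by (simp add: scalar_prod_def)
  finally show ?thesis
    unfolding AP PA using DD scalar_prod_self_nonneg[of "D *\<^sub>v z"] by linarith
qed

lemma quadratic_form_has_derivative:
  fixes P :: "real mat" and z :: "real \<Rightarrow> real vec"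
  assumes P: "P \<in> carrier_mat N N" and z: "\<And>s. z s \<in> carrier_vec N"
    and z': "z' \<in> carrier_vec N"
    and deriv: "\<And>i. i < N \<Longrightarrow> ((\<lambda>s. z s $ i) has_real_derivative z' $ i) (at t within T)"
  shows "((\<lambda>s. z s \<bullet> (P *\<^sub>v z s)) has_real_derivative z' \<bullet> (P *\<^sub>v z t) + z t \<bullet> (P *\<^sub>v z'))
           (at t within T)"
proof -
  have form: "u \<bullet> (P *\<^sub>v v) = (\<Sum>i<N. \<Sum>j<N. u $ i * (P $$ (i, j) * v $ j))"
    if "u \<in> carrier_vec N" "v \<in> carrier_vec N" for u v
    using P that by (simp add: scalar_prod_def row_def atLeast0LessThan sum_distrib_left)
  have "((\<lambda>s. \<Sum>i<N. \<Sum>j<N. z s $ i * (P $$ (i, j) * z s $ j)) has_real_derivative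
      (\<Sum>i<N. \<Sum>j<N. z t $ i * (P $$ (i, j) * z' $ j) + z' $ i * (P $$ (i, j) * z t $ j)))
      (at t within T)"
    by (intro DERIV_sum DERIV_mult' DERIV_cmult deriv) auto
  moreover have "(\<lambda>s. z s \<bullet> (P *\<^sub>v z s)) = (\<lambda>s. \<Sum>i<N. \<Sum>j<N. z s $ i * (P $$ (i, j) * z s $ j))"
    using form z by auto
  moreover have "z' \<bullet> (P *\<^sub>v z t) + z t \<bullet> (P *\<^sub>v z')
      = (\<Sum>i<N. \<Sum>j<N. z t $ i * (P $$ (i, j) * z' $ j) + z' $ i * (P $$ (i, j) * z t $ j))"
    using form z z' by (simp add: sum.distrib)
  ultimately show ?thesis
    by simp
qed

lemma nonpos_derivative_imp_le_initial:
  fixes V V' :: "real \<Rightarrow> real"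
  assumes deriv: "\<And>s. s \<ge> 0 \<Longrightarrow> (V has_real_derivative V' s) (at s within {0..})"
    and nonpos: "\<And>s. s \<ge> 0 \<Longrightarrow> V' s \<le> 0" and t: "t \<ge> 0"
  shows "V t \<le> V 0"
proof (rule DERIV_nonpos_imp_decreasing_open[OF t])
  have deriv_t: "(V has_real_derivative V' s) (at s within {0..t})" if "0 \<le> s" for s
    using deriv[OF that] by (rule DERIV_subset) auto
  show "\<exists>y. (V has_real_derivative y) (at x) \<and> y \<le> 0" if "0 < x" "x < t" for x
    using deriv_t[of x] that at_within_Icc_at[of 0 x t] nonpos[of x] by auto
  show "continuous_on {0..t} V"
    unfolding continuous_on_eq_continuous_within
    using DERIV_continuous[OF deriv_t] by auto
qed

lemma lyapunov_sublevel_invariant: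
  fixes A P D :: "real mat" and z :: "real \<Rightarrow> real vec"
  assumes A: "A \<in> carrier_mat N N" and P: "P \<in> carrier_mat N N" and D: "D \<in> carrier_mat r N"
    and lyap: "transpose_mat A * P + P * A + transpose_mat D * D = 0\<^sub>m N N"
    and z: "\<And>s. z s \<in> carrier_vec N"
    and ode: "\<And>i s. i < N \<Longrightarrow> s \<ge> 0 \<Longrightarrow>
                ((\<lambda>s. z s $ i) has_real_derivative (A *\<^sub>v z s) $ i) (at s within {0..})"
    and t: "t \<ge> 0"
  shows "z t \<bullet> (P *\<^sub>v z t) \<le> z 0 \<bullet> (P *\<^sub>v z 0)"
proof (rule nonpos_derivative_imp_le_initial[OF _ _ t])
  fix s :: real
  assume s: "s \<ge> 0"
  show "((\<lambda>s. z s \<bullet> (P *\<^sub>v z s)) has_real_derivative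
      (A *\<^sub>v z s) \<bullet> (P *\<^sub>v z s) + z s \<bullet> (P *\<^sub>v (A *\<^sub>v z s))) (at s within {0..})"
    by (rule quadratic_form_has_derivative[OF P z _ ode[OF _ s]]) (use A z in auto)
  show "(A *\<^sub>v z s) \<bullet> (P *\<^sub>v z s) + z s \<bullet> (P *\<^sub>v (A *\<^sub>v z s)) \<le> 0"
    by (rule lyapunov_quadratic_form_nonpos[OF A P D lyap z])
qed

section \<open>The companion system\<close>

lemma mult_add_less_mult:
  fixes k n a m :: nat
  assumes "k < n" and "a < m"
  shows "k * m + a < n * m"
proof -
  have "k * m + a < Suc k * m"
    using assms(2) by simp
  also have "\<dots> \<le> n * m"
    using assms(1) by (intro mult_le_mono1) simp
  finally show ?thesis .
qed

text \<open>The paper's stacked state \<open>z = (x\<^sup>(\<^sup>0\<^sup>), \<dots>, x\<^sup>(\<^sup>n\<^sup>-\<^sup>1\<^sup>))\<close>, with entry \<open>a\<close> of block \<open>k\<close>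
  at index \<open>k * m + a\<close>.\<close>
definition stack :: "nat \<Rightarrow> nat \<Rightarrow> (nat \<Rightarrow> nat \<Rightarrow> 'a) \<Rightarrow> 'a vec" where
  "stack n m x = vec (n * m) (\<lambda>i. x (i div m) (i mod m))"

lemma stack_carrier: "stack n m x \<in> carrier_vec (n * m)"
  unfolding stack_def by simp

lemma stack_index:
  assumes "k < n" and "a < m"
  shows "stack n m x $ (k * m + a) = x k a"
  using mult_add_less_mult[OF assms] assms unfolding stack_def by simp

lemma I_sel_mult_stack:
  assumes "n \<ge> 1"
  shows "I_sel m (n * m) *\<^sub>v stack n m x = vec m (x 0)"
proof -
  have mN: "m \<le> n * m"
    using assms by simp
  show ?thesis
    using stack_index[of 0 n _ m x] assms unfolding I_sel_mult_vec[OF stack_carrier mN]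
    by (intro eq_vecI) auto
qed

lemma stack_eqI:
  assumes v: "v \<in> carrier_vec (n * m)" and entries: "\<And>k a. k < n \<Longrightarrow> a < m \<Longrightarrow> v $ (k * m + a) = x k a"
  shows "stack n m x = v"
proof (rule eq_vecI)
  fix i assume "i < dim_vec v"
  then have i: "i < n * m"
    using v by simp
  then have m: "m > 0"
    by (cases m) auto
  have "i div m < n" "i mod m < m"
    using i m by (auto simp: less_mult_imp_div_less)
  then show "stack n m x $ i = v $ i"
    using entries[of "i div m" "i mod m"] stack_index[of "i div m" n "i mod m" m x] by simp
qed (use v in \<open>simp add: stack_def\<close>)

lemma sum_lessThan_mult:
  fixes f :: "nat \<Rightarrow> 'a :: comm_monoid_add"
  shows "(\<Sum>j<n * m. f j) = (\<Sum>k<n. \<Sum>b<m. f (k * m + b))"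
proof (induction n)
  case (Suc n)
  have split: "(\<Sum>j<a + c. f j) = (\<Sum>j<a. f j) + (\<Sum>b<c. f (a + b))" for a c
    by (induction c) (auto simp: ac_simps)
  show ?case
    using Suc split[of "n * m" m] by (simp add: add.commute)
qed simp

lemma kron_one_mult_stack:
  fixes C :: "real mat"
  assumes C: "C \<in> carrier_mat n n" and k: "k < n" and a: "a < m"
  shows "(kron C (1\<^sub>m m) *\<^sub>v stack n m x) $ (k * m + a) = (\<Sum>j<n. C $$ (k, j) * x j a)"
proof -
  have i: "k * m + a < n * m"
    using mult_add_less_mult[OF k a] .
  have "(kron C (1\<^sub>m m) *\<^sub>v stack n m x) $ (k * m + a)
      = (\<Sum>i<n * m. C $$ (k, i div m) * (1\<^sub>m m :: real mat) $$ (a, i mod m) * stack n m x $ i)"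
    using C i a unfolding kron_def by (simp add: scalar_prod_def atLeast0LessThan stack_def)
  also have "\<dots> = (\<Sum>j<n. \<Sum>b<m. if b = a then C $$ (k, j) * x j a else 0)"
    unfolding sum_lessThan_mult using a stack_index[of _ n _ m x]
    by (intro sum.cong refl) auto
  also have "\<dots> = (\<Sum>j<n. C $$ (k, j) * x j a)"
    using a by simp
  finally show ?thesis .
qed

lemma companion_row_sum:
  assumes k: "k < n"
  shows "(\<Sum>j<n. companion n lam $$ (k, j) * y j)
    = (if Suc k < n then y (Suc k) else - (\<Sum>j<n. kappa n lam j * y j))"
proof (cases "Suc k < n")
  case True
  then have "(\<Sum>j<n. companion n lam $$ (k, j) * y j) = (\<Sum>j<n. if j = Suc k then y j else 0)"
    using k unfolding companion_def by (intro sum.cong refl) auto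
  then show ?thesis
    using True by simp
next
  case False
  then have "(\<Sum>j<n. companion n lam $$ (k, j) * y j) = (\<Sum>j<n. - (kappa n lam j * y j))"
    using k unfolding companion_def by (intro sum.cong refl) auto
  then show ?thesis
    using False by (simp add: sum_negf)
qed

lemma companion_system_has_derivative:
  fixes xd :: "nat \<Rightarrow> nat \<Rightarrow> real \<Rightarrow> real"
  assumes deriv: "\<forall>k<n. \<forall>a<m. \<forall>t\<ge>0. (xd k a has_real_derivative xd (Suc k) a t) (at t within {0..})"
    and ode: "\<forall>a<m. \<forall>t\<ge>0. xd n a t = - (\<Sum>k<n. kappa n lam k * xd k a t)"
    and i: "i < n * m" and s: "s \<ge> 0"
  shows "((\<lambda>s. stack n m (\<lambda>k a. xd k a s) $ i) has_real_derivative
           (kron (companion n lam) (1\<^sub>m m) *\<^sub>v stack n m (\<lambda>k a. xd k a s)) $ i) (at s within {0..})"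
proof -
  have m: "m > 0"
    using i by (cases m) auto
  define k a where "k = i div m" and "a = i mod m"
  have k: "k < n" and a: "a < m" and i_eq: "i = k * m + a"
    unfolding k_def a_def using i m by (auto simp: less_mult_imp_div_less)
  have C: "companion n lam \<in> carrier_mat n n"
    unfolding companion_def by simp
  have "(kron (companion n lam) (1\<^sub>m m) *\<^sub>v stack n m (\<lambda>k a. xd k a s)) $ i = xd (Suc k) a s"
    unfolding i_eq kron_one_mult_stack[OF C k a] companion_row_sum[OF k]
    using ode a s k by (cases "Suc k = n") auto
  moreover have "(xd k a has_real_derivative xd (Suc k) a s) (at s within {0..})"
    using deriv k a s by blast
  ultimately show ?thesis
    unfolding i_eq stack_index[OF k a] by simp
qed

theorem proposition12:
  fixes n m r :: nat
    and lam :: "nat \<Rightarrow> complex"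
    and D P :: "real mat"
    and z0 :: "real vec"
    and xd :: "nat \<Rightarrow> nat \<Rightarrow> real \<Rightarrow> real"
  defines "A \<equiv> kron (companion n lam) (1\<^sub>m m)"
  assumes n_pos: "n \<ge> 1"
    and neg_re: "\<forall>i<n. Re (lam i) < 0"
    and real_coeffs: "\<forall>k. Im (coeff (charpoly_lam n lam) k) = 0"
    and D_dim: "D \<in> carrier_mat r (n * m)"
    and obs: "observable (n * m) A D"
    and P_pd: "pos_def (n * m) P"
    and lyap: "transpose_mat A * P + P * A + transpose_mat D * D = 0\<^sub>m (n * m) (n * m)"
    and z0_dim: "z0 \<in> carrier_vec (n * m)"
    and deriv: "\<forall>k<n. \<forall>a<m. \<forall>t\<ge>0.
                  (xd k a has_real_derivative xd (Suc k) a t) (at t within {0..})"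
    and ode: "\<forall>a<m. \<forall>t\<ge>0. xd n a t = - (\<Sum>k<n. kappa n lam k * xd k a t)"
    and init: "\<forall>k<n. \<forall>a<m. xd k a 0 = z0 $ (k * m + a)"
  shows "\<forall>t\<ge>0. vec m (\<lambda>a. xd 0 a t) \<in>
           ellipsoid m (0\<^sub>v m) (I_sel m (n * m) * mat_inv (n * m) P * transpose_mat (I_sel m (n * m)))
             (P_norm P z0)"
proof (intro allI impI)
  fix t :: real
  assume t: "t \<ge> 0"
  define z where "z s = stack n m (\<lambda>k a. xd k a s)" for s
  have z: "z s \<in> carrier_vec (n * m)" for s
    unfolding z_def by (rule stack_carrier)
  have A: "A \<in> carrier_mat (n * m) (n * m)" and P: "P \<in> carrier_mat (n * m) (n * m)"
    using P_pd unfolding A_def kron_def companion_def pos_def_def by auto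
  have mN: "m \<le> n * m"
    using n_pos by simp
  have "z t \<bullet> (P *\<^sub>v z t) \<le> z 0 \<bullet> (P *\<^sub>v z 0)"
    using lyapunov_sublevel_invariant[where z = z, OF A P D_dim lyap z _ t]
      companion_system_has_derivative[OF deriv ode] unfolding z_def A_def by blast
  also have "z 0 = z0"
    unfolding z_def using init z0_dim by (intro stack_eqI) auto
  finally have "I_sel m (n * m) *\<^sub>v z t
      \<in> ellipsoid m (0\<^sub>v m) (I_sel m (n * m) * mat_inv (n * m) P * transpose_mat (I_sel m (n * m)))
          (P_norm P z0)"
    using P_norm_sq[OF pos_def_imp_pos_semidef[OF P_pd] z0_dim]
    by (intro ellipsoid_contains_image[OF P_pd I_sel_carrier transpose_I_sel_mult_vec_eq_0D[OF _ mN] z])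
      auto
  then show "vec m (\<lambda>a. xd 0 a t) \<in>
      ellipsoid m (0\<^sub>v m) (I_sel m (n * m) * mat_inv (n * m) P * transpose_mat (I_sel m (n * m)))
        (P_norm P z0)"
    unfolding z_def I_sel_mult_stack[OF n_pos] .
qed

end
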